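(* Let $\Sigma$ be a finite alphabet and $\$\notin\Sigma$. If $L_1,\dots,L_n\subseteq\Sigma^*$ are languages each definable by a regulated $\mathsf{C\text{-}RASP}$ formula over $\Sigma$, then the language $L_1\$L_2\$\cdots\$L_n\subseteq(\Sigma\cup\{\$\})^*$ is definable by a $\mathsf{C\text{-}RASP}$ formula.
   Context: $\mathsf{C\text{-}RASP}$ formulas over a finite alphabet $\Sigma$: $\phi ::= \sigma \mid \Diamond^{-}\phi \mid \Box^{-}\phi \mid \neg\phi \mid \phi_1\wedge\phi_2 \mid \sum_{t\in\mathcal{T}}\alpha_t t\sim k$, terms $t ::= \#[\phi] \mid c$, with $\sigma\in\Sigma$, $\alpha_t,k,c\in\mathbb{Z}$, ${\sim}\in\{<,\le,=,\ge,>\}$. Semantics at position $i$ of $w=w_1\cdots w_n$: $w,i\models\sigma$ iff $w_i=\sigma$; Boolean connectives as usual; $w,i\models\Diamond^{-}\phi$ iff $w,j\models\phi$ for some $j<i$; $w,i\models\Box^{-}\phi$ iff $w,j\models\phi$ for all $j\le i$; $\#[\phi]$ evaluates to $|\{j\in[1,i]: w,j\models\phi\}|$, $c$ to $c$, comparisons are integer comparisons. $w\models\phi$ iff $w,|w|\models\phi$, and $\phi$ defines $L(\phi)=\{w: w\models\phi\}$. A formula is regulated if no atomic formula $\sigma$ occurs outside the scope of a counting operator $\#$. *)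

theory Defs
  imports Main
begin

datatype cmpop = Lt | Le | Eq | Ge | Gt

datatype 'a crasp =
    Sym 'a
  | Dia "'a crasp"
  | Box "'a crasp"
  | Neg "'a crasp"
  | Conj "'a crasp" "'a crasp"
  | Cmp "(int \<times> 'a cterm) list" cmpop int
and 'a cterm =
    Count "'a crasp"
  | Const int

fun cmp_sem :: "cmpop \<Rightarrow> int \<Rightarrow> int \<Rightarrow> bool" where
  "cmp_sem Lt x y = (x < y)"
| "cmp_sem Le x y = (x \<le> y)"
| "cmp_sem Eq x y = (x = y)"
| "cmp_sem Ge x y = (x \<ge> y)"
| "cmp_sem Gt x y = (x > y)"

text \<open>Positions are 1-based: position i of w refers to w ! (i - 1), for 1 \<le> i \<le> length w.\<close>

fun sat :: "'a list \<Rightarrow> nat \<Rightarrow> 'a crasp \<Rightarrow> bool"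
and tval :: "'a list \<Rightarrow> nat \<Rightarrow> 'a cterm \<Rightarrow> int" where
  "sat w i (Sym s) = (1 \<le> i \<and> i \<le> length w \<and> w ! (i - 1) = s)"
| "sat w i (Dia f) = (\<exists>j. 1 \<le> j \<and> j < i \<and> sat w j f)"
| "sat w i (Box f) = (\<forall>j. 1 \<le> j \<and> j \<le> i \<longrightarrow> sat w j f)"
| "sat w i (Neg f) = (\<not> sat w i f)"
| "sat w i (Conj f g) = (sat w i f \<and> sat w i g)"
| "sat w i (Cmp ts op k) =
     cmp_sem op (sum_list (map (\<lambda>p. fst p * tval w i (snd p)) ts)) k"
| "tval w i (Count f) = int (card {j. 1 \<le> j \<and> j \<le> i \<and> sat w j f})"
| "tval w i (Const c) = c"

definition lang :: "'a crasp \<Rightarrow> 'a list set" where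
  "lang f = {w. sat w (length w) f}"

text \<open>Regulated: no atomic formula occurs outside the scope of a counting operator.
  Everything inside a comparison (i.e. inside some #[.]) is in such a scope.\<close>
fun regulated :: "'a crasp \<Rightarrow> bool" where
  "regulated (Sym s) = False"
| "regulated (Dia f) = regulated f"
| "regulated (Box f) = regulated f"
| "regulated (Neg f) = regulated f"
| "regulated (Conj f g) = (regulated f \<and> regulated g)"
| "regulated (Cmp ts op k) = True"

text \<open>The separator \$ is None; letters of \<Sigma> are Some a.
  joinsep [w1,...,wn] = w1 \$ w2 \$ ... \$ wn.\<close>
fun joinsep :: "'a list list \<Rightarrow> 'a option list" where
  "joinsep [] = []"
| "joinsep [w] = map Some w"
| "joinsep (w # ws) = map Some w @ None # joinsep ws"

definition sepconcat :: "'a list set list \<Rightarrow> 'a option list set" where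
  "sepconcat Ls = {joinsep ws | ws. length ws = length Ls \<and> (\<forall>i < length Ls. ws ! i \<in> Ls ! i)}"

end

(*
  Write the word as w_0 $ w_1 $ ... $ w_(n-1). Position j lies in block k iff it carries a letter
  and exactly k separators occur up to j; this is a C-RASP formula. Relativizing a formula to
  block k (letters become Some letters, every count only counts positions of block k) makes it
  speak about w_k: before the block it behaves as at position 0 of w_k, after the block as at
  the last position of w_k.
  Since in a regulated formula every letter test sits under a count, evaluating the relativized
  formula at the last position of the whole word yields its value at the last position of w_k.
  The concatenation is then defined by "exactly n - 1 separators" conjoined with the n
  relativized formulas.
*)

theory Submission
  imports Defs
begin

definition Disj :: "'a crasp \<Rightarrow> 'a crasp \<Rightarrow> 'a crasp" where
  "Disj f g = Neg (Conj (Neg f) (Neg g))"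

definition count_cmp :: "'a crasp \<Rightarrow> cmpop \<Rightarrow> int \<Rightarrow> 'a crasp" where
  "count_cmp f op c = Cmp [(1, Count f)] op c"

primrec conj_list :: "'a crasp list \<Rightarrow> 'a crasp" where
  "conj_list [] = Cmp [] Eq 0"
| "conj_list (f # fs) = Conj f (conj_list fs)"

lemma sat_Disj [simp]: "sat w i (Disj f g) \<longleftrightarrow> sat w i f \<or> sat w i g"
  by (simp add: Disj_def)

lemma sat_count_cmp: "sat w i (count_cmp f op c) \<longleftrightarrow> cmp_sem op (tval w i (Count f)) c"
  by (simp add: count_cmp_def)

lemma sat_conj_list [simp]: "sat w i (conj_list fs) \<longleftrightarrow> (\<forall>f \<in> set fs. sat w i f)"
  by (induction fs) auto

lemma card_sat_Sym:
  assumes "i \<le> length w"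
  shows "card {j. 1 \<le> j \<and> j \<le> i \<and> sat w j (Sym x)} = count_list (take i w) x"
proof -
  have "{j. 1 \<le> j \<and> j \<le> i \<and> sat w j (Sym x)} = Suc ` {j. j < i \<and> w ! j = x}"
    using assms by (auto simp: image_iff Suc_le_eq dest!: less_imp_Suc_add)
  also have "card \<dots> = card {j. j < length (take i w) \<and> x = take i w ! j}"
    using assms by (auto simp: card_image intro: arg_cong[where f = card])
  finally show ?thesis
    by (simp add: count_list_eq_length_filter length_filter_conv_card)
qed

lemma ex_less_iff_card:
  fixes m :: nat
  shows "(\<exists>j. 1 \<le> j \<and> j < m \<and> Q j) \<longleftrightarrow>
    (Q m \<and> card {j. 1 \<le> j \<and> j \<le> m \<and> Q j} \<ge> 2) \<or>
    (\<not> Q m \<and> card {j. 1 \<le> j \<and> j \<le> m \<and> Q j} \<ge> 1)"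
proof (cases "m = 0")
  case True
  then have none: "{j. 1 \<le> j \<and> j \<le> m \<and> Q j} = {}" by auto
  show ?thesis unfolding none using True by simp
next
  case False
  let ?S = "{j. 1 \<le> j \<and> j < m \<and> Q j}"
  have "{j. 1 \<le> j \<and> j \<le> m \<and> Q j} = ?S \<union> (if Q m then {m} else {})"
    using False by (auto simp: le_less)
  moreover have "(\<exists>j. 1 \<le> j \<and> j < m \<and> Q j) \<longleftrightarrow> card ?S \<ge> 1"
    by (auto simp: Suc_le_eq card_gt_0_iff)
  ultimately show ?thesis by auto
qed

definition in_block :: "nat \<Rightarrow> 'a option crasp" where
  "in_block k = Conj (Neg (Sym None)) (count_cmp (Sym None) Eq (int k))"

lemma sat_in_block_iff_count:
  assumes "1 \<le> j" "j \<le> length w"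
  shows "sat w j (in_block k) \<longleftrightarrow> w ! (j - 1) \<noteq> None \<and> count_list (take j w) None = k"
  using assms by (simp only: in_block_def sat.simps(4,5) sat_count_cmp tval.simps card_sat_Sym) simp

(* Dia f is not relativized as Dia (Conj (relativize k f) (in_block k)): after the block the
   evaluation point is clamped to the last block position, which must not count as strict past.
   Hence the positions of the block satisfying f are counted, discounting the current one. *)
primrec relativize :: "nat \<Rightarrow> 'a crasp \<Rightarrow> 'a option crasp"
  and relativize_term :: "nat \<Rightarrow> 'a cterm \<Rightarrow> 'a option cterm" where
  "relativize k (Sym s) = Sym (Some s)"
| "relativize k (Dia f) =
     Disj (Conj (relativize k f) (count_cmp (Conj (relativize k f) (in_block k)) Ge 2))
          (Conj (Neg (relativize k f)) (count_cmp (Conj (relativize k f) (in_block k)) Ge 1))"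
| "relativize k (Box f) = count_cmp (Conj (Neg (relativize k f)) (in_block k)) Eq 0"
| "relativize k (Neg f) = Neg (relativize k f)"
| "relativize k (Conj f g) = Conj (relativize k f) (relativize k g)"
| "relativize k (Cmp ts op c) = Cmp (map (map_prod id (relativize_term k)) ts) op c"
| "relativize_term k (Count f) = Count (Conj (relativize k f) (in_block k))"
| "relativize_term k (Const c) = Const c"

lemma nth_append_map_Some:
  assumes "length u < j" "j \<le> length u + length b"
  shows "(u @ map Some b @ v) ! (j - 1) = Some (b ! (j - length u - 1))"
proof -
  have "\<not> j - 1 < length u" "j - 1 - length u < length b"
    using assms by auto
  then show ?thesis by (simp add: nth_append)
qed

context
  fixes w u v :: "'a option list" and b :: "'a list" and k :: nat
  assumes w_decomp: "w = u @ map Some b @ v"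
    and count_before: "count_list u None = k"
    and u_ends_sep: "u = [] \<or> last u = None"
    and v_starts_sep: "v = [] \<or> hd v = None"
begin

lemma sat_in_block_iff:
  assumes "1 \<le> j" "j \<le> length w"
  shows "sat w j (in_block k) \<longleftrightarrow> length u < j \<and> j \<le> length u + length b"
proof -
  have sat_iff:
    "sat w j (in_block k) \<longleftrightarrow> w ! (j - 1) \<noteq> None \<and> count_list (take j w) None = k"
    using assms by (rule sat_in_block_iff_count)
  consider "j < length u" | "j = length u" | "length u < j \<and> j \<le> length u + length b"
    | "length u + length b < j" by linarith
  then show ?thesis
  proof cases
    case 1
    then have "last u \<in> set (drop j u)"
      by (metis drop_eq_Nil last_drop last_in_set not_le)
    then have "count_list (drop j u) None \<noteq> 0"
      using 1 u_ends_sep by (auto simp: count_list_0_iff)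
    moreover have "count_list (take j u) None + count_list (drop j u) None = k"
      using count_before by (metis append_take_drop_id count_list_append)
    ultimately show ?thesis using 1 sat_iff w_decomp by simp
  next
    case 2
    with assms have "u \<noteq> []" by auto
    then have "w ! (j - 1) = last u"
      using 2 w_decomp by (simp add: nth_append last_conv_nth)
    then show ?thesis using 2 assms u_ends_sep sat_iff by auto
  next
    case 3
    then have "w ! (j - 1) = Some (b ! (j - length u - 1))"
      unfolding w_decomp by (intro nth_append_map_Some) auto
    moreover have "take j w = u @ map Some (take (j - length u) b)"
      using 3 w_decomp by (simp add: take_map)
    ultimately show ?thesis
      using 3 sat_iff count_before by (simp add: count_list_0_iff)
  next
    case 4
    then obtain n where n: "j - length u - length b = Suc n" by (metis Suc_diff_Suc diff_diff_left)
    have "v \<noteq> []" using 4 assms w_decomp by auto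
    then have "count_list (take (Suc n) v) None \<noteq> 0"
      using v_starts_sep by (cases v) auto
    moreover have "take j w = u @ map Some b @ take (Suc n) v"
      using 4 n w_decomp by simp
    ultimately show ?thesis using 4 sat_iff count_before by (simp add: count_list_0_iff)
  qed
qed

lemma tval_Count_in_block:
  assumes f_block: "\<And>j. length u < j \<Longrightarrow> j \<le> length u + length b \<Longrightarrow>
      sat w j f \<longleftrightarrow> Q (j - length u)"
    and "i \<le> length w"
  shows "tval w i (Count (Conj f (in_block k))) =
    int (card {j. 1 \<le> j \<and> j \<le> min (i - length u) (length b) \<and> Q j})"
proof -
  have "{j. 1 \<le> j \<and> j \<le> i \<and> sat w j (Conj f (in_block k))} =
      {j. length u < j \<and> j \<le> min i (length u + length b) \<and> Q (j - length u)}"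
  proof (rule Collect_cong)
    fix j
    show "1 \<le> j \<and> j \<le> i \<and> sat w j (Conj f (in_block k)) \<longleftrightarrow>
        length u < j \<and> j \<le> min i (length u + length b) \<and> Q (j - length u)"
    proof (cases "1 \<le> j \<and> j \<le> i")
      case True
      then show ?thesis using sat_in_block_iff[of j] f_block[of j] assms(2) by auto
    qed auto
  qed
  also have "\<dots> =
      (\<lambda>j. j + length u) ` {j. 1 \<le> j \<and> j \<le> min (i - length u) (length b) \<and> Q j}"
    by (auto simp: image_iff dest!: less_imp_Suc_add)
  finally show ?thesis by (simp add: card_image)
qed

lemma sat_relativize:
  "i \<le> length w \<Longrightarrow> (length u < i \<and> i \<le> length u + length b) \<or> regulated \<phi> \<Longrightarrow>
    sat w i (relativize k \<phi>) \<longleftrightarrow> sat b (min (i - length u) (length b)) \<phi>"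
  "i \<le> length w \<Longrightarrow>
    tval w i (relativize_term k t) = tval b (min (i - length u) (length b)) t"
proof (induction \<phi> and t arbitrary: i and i)
  case (Sym s)
  then have "w ! (i - 1) = Some (b ! (i - length u - 1))"
    unfolding w_decomp by (intro nth_append_map_Some) auto
  with Sym show ?case by auto
next
  case (Dia \<phi>)
  define m where "m = min (i - length u) (length b)"
  have here: "sat w i (relativize k \<phi>) \<longleftrightarrow> sat b m \<phi>"
    using Dia by (auto simp: m_def)
  have count: "tval w i (Count (Conj (relativize k \<phi>) (in_block k))) =
      int (card {j. 1 \<le> j \<and> j \<le> m \<and> sat b j \<phi>})"
    unfolding m_def by (rule tval_Count_in_block) (use Dia.IH Dia.prems w_decomp in auto)
  show ?case
    unfolding relativize.simps sat_Disj sat.simps(4,5) sat_count_cmp count here m_def[symmetric]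
    using ex_less_iff_card[of m "\<lambda>j. sat b j \<phi>"] by auto
next
  case (Box \<phi>)
  define m where "m = min (i - length u) (length b)"
  have count: "tval w i (Count (Conj (Neg (relativize k \<phi>)) (in_block k))) =
      int (card {j. 1 \<le> j \<and> j \<le> m \<and> \<not> sat b j \<phi>})"
    unfolding m_def by (rule tval_Count_in_block) (use Box.IH Box.prems w_decomp in auto)
  show ?case
    unfolding relativize.simps sat_count_cmp count m_def[symmetric] by auto
next
  case (Cmp ts op c)
  define m where "m = min (i - length u) (length b)"
  have "map (\<lambda>p. fst p * tval w i (relativize_term k (snd p))) ts =
      map (\<lambda>p. fst p * tval b m (snd p)) ts"
  proof (rule map_cong[OF refl])
    fix p assume "p \<in> set ts"
    moreover obtain a t where "p = (a, t)" by fastforce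
    ultimately show "fst p * tval w i (relativize_term k (snd p)) = fst p * tval b m (snd p)"
      using Cmp.IH[of p t] Cmp.prems by (simp add: m_def)
  qed
  then show ?case
    by (simp only: relativize.simps sat.simps map_map comp_def fst_map_prod snd_map_prod id_apply m_def)
next
  case (Count \<phi>)
  show ?case
    unfolding relativize_term.simps tval.simps(1)[where w = b]
    by (rule tval_Count_in_block) (use Count.IH Count.prems w_decomp in auto)
qed auto

end

lemma joinsep_block_decomp:
  "k < length ws \<Longrightarrow> \<exists>u v. joinsep ws = u @ map Some (ws ! k) @ v \<and> count_list u None = k \<and>
     (u = [] \<or> last u = None) \<and> (v = [] \<or> hd v = None)"
proof (induction ws arbitrary: k rule: joinsep.induct)
  case (2 w)
  then show ?case by (intro exI[of _ "[]"]) simp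
next
  case (3 w w' ws)
  show ?case
  proof (cases k)
    case 0
    then show ?thesis by (intro exI[of _ "[]"] exI[of _ "None # joinsep (w' # ws)"]) simp
  next
    case (Suc k')
    then obtain u v where "joinsep (w' # ws) = u @ map Some ((w' # ws) ! k') @ v"
      "count_list u None = k'" "u = [] \<or> last u = None" "v = [] \<or> hd v = None"
      using "3.IH"[of k'] "3.prems" by auto
    with Suc show ?thesis
      by (intro exI[of _ "map Some w @ None # u"] exI[of _ v]) (auto simp: count_list_0_iff)
  qed
qed simp

fun splitsep :: "'a option list \<Rightarrow> 'a list list" where
  "splitsep [] = [[]]"
| "splitsep (None # xs) = [] # splitsep xs"
| "splitsep (Some a # xs) = (let bs = splitsep xs in (a # hd bs) # tl bs)"

lemma splitsep_neq_Nil: "splitsep xs \<noteq> []"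
  by (induction xs rule: splitsep.induct) (auto simp: Let_def)

lemma length_splitsep: "length (splitsep xs) = Suc (count_list xs None)"
  by (induction xs rule: splitsep.induct) (auto simp: Let_def splitsep_neq_Nil)

lemma joinsep_Cons_Cons: "joinsep ((a # w) # ws) = Some a # joinsep (w # ws)"
  by (cases ws) auto

lemma joinsep_splitsep: "joinsep (splitsep xs) = xs"
proof (induction xs rule: splitsep.induct)
  case (2 xs)
  obtain b bs where "splitsep xs = b # bs"
    using splitsep_neq_Nil by (meson neq_Nil_conv)
  with 2 show ?case by simp
next
  case (3 a xs)
  then show ?case
    using splitsep_neq_Nil[of xs] by (simp add: Let_def joinsep_Cons_Cons)
qed simp

lemma splitsep_map_Some: "splitsep (map Some w @ xs) = (w @ hd (splitsep xs)) # tl (splitsep xs)"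
  by (induction w) (simp_all add: Let_def splitsep_neq_Nil)

lemma splitsep_joinsep: "ws \<noteq> [] \<Longrightarrow> splitsep (joinsep ws) = ws"
proof (induction ws rule: joinsep.induct)
  case (2 w)
  then show ?case using splitsep_map_Some[of w "[]"] by simp
qed (simp_all add: splitsep_map_Some)

lemma mem_sepconcat_iff:
  assumes "Ls \<noteq> []"
  shows "x \<in> sepconcat Ls \<longleftrightarrow>
    length (splitsep x) = length Ls \<and> (\<forall>k < length Ls. splitsep x ! k \<in> Ls ! k)"
proof
  assume "x \<in> sepconcat Ls"
  then obtain ws where "x = joinsep ws" "length ws = length Ls" "\<forall>k < length Ls. ws ! k \<in> Ls ! k"
    unfolding sepconcat_def by blast
  moreover from this assms have "splitsep x = ws" by (auto intro: splitsep_joinsep)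
  ultimately show "length (splitsep x) = length Ls \<and> (\<forall>k < length Ls. splitsep x ! k \<in> Ls ! k)"
    by simp
next
  assume "length (splitsep x) = length Ls \<and> (\<forall>k < length Ls. splitsep x ! k \<in> Ls ! k)"
  then show "x \<in> sepconcat Ls"
    unfolding sepconcat_def using joinsep_splitsep[of x] by force
qed

lemma sat_relativize_splitsep:
  assumes "k < length (splitsep x)" "regulated f"
  shows "sat x (length x) (relativize k f) \<longleftrightarrow> splitsep x ! k \<in> lang f"
proof -
  define b where "b = splitsep x ! k"
  obtain u v where "x = u @ map Some b @ v" "count_list u None = k"
    "u = [] \<or> last u = None" "v = [] \<or> hd v = None"
    using joinsep_block_decomp[OF assms(1)] unfolding b_def joinsep_splitsep by blast
  from sat_relativize(1)[OF this, of "length x" f] assms(2) \<open>x = _\<close>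
  have "sat x (length x) (relativize k f) \<longleftrightarrow> sat b (length b) f" by simp
  then show ?thesis by (simp add: lang_def b_def)
qed

definition sepconcat_formula :: "'a crasp list \<Rightarrow> 'a option crasp" where
  "sepconcat_formula fs =
    Conj (count_cmp (Sym None) Eq (int (length fs - 1)))
      (conj_list (map (\<lambda>k. relativize k (fs ! k)) [0..<length fs]))"

lemma lang_sepconcat_formula:
  assumes "fs \<noteq> []" "\<forall>f \<in> set fs. regulated f"
  shows "lang (sepconcat_formula fs) = sepconcat (map lang fs)"
proof (rule set_eqI)
  fix x :: "'a option list"
  have count: "sat x (length x) (count_cmp (Sym None) Eq (int (length fs - 1))) \<longleftrightarrow>
      length (splitsep x) = length fs"
    using assms(1) by (simp only: sat_count_cmp tval.simps card_sat_Sym) (auto simp: length_splitsep)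
  have "x \<in> lang (sepconcat_formula fs) \<longleftrightarrow>
      length (splitsep x) = length fs \<and> (\<forall>k < length fs. sat x (length x) (relativize k (fs ! k)))"
    using count by (auto simp: lang_def sepconcat_formula_def)
  also have "\<dots> \<longleftrightarrow>
      length (splitsep x) = length fs \<and> (\<forall>k < length fs. splitsep x ! k \<in> lang (fs ! k))"
    using assms(2) by (auto simp: sat_relativize_splitsep)
  also have "\<dots> \<longleftrightarrow> x \<in> sepconcat (map lang fs)"
    using assms(1) by (simp add: mem_sepconcat_iff)
  finally show "x \<in> lang (sepconcat_formula fs) \<longleftrightarrow> x \<in> sepconcat (map lang fs)" .
qed

theorem lemma3p5:
  fixes Ls :: "('a::finite) list set list"
  assumes "Ls \<noteq> []"
    and "\<forall>L \<in> set Ls. \<exists>f. regulated f \<and> L = lang f"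
  shows "\<exists>g :: 'a option crasp. sepconcat Ls = lang g"
proof -
  obtain F where F: "\<forall>L \<in> set Ls. regulated (F L) \<and> L = lang (F L)"
    using assms(2) by metis
  then have "map lang (map F Ls) = Ls"
    by (simp add: map_idI)
  moreover have "lang (sepconcat_formula (map F Ls)) = sepconcat (map lang (map F Ls))"
    using assms(1) F by (intro lang_sepconcat_formula) auto
  ultimately show ?thesis by metis
qed

end
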